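(* Let $G$ be a cyclically $4$-edge-connected cubic graph and $E(A,B)=\{e_1,e_2,e_3,e_4\}$ a cyclic $4$-edge-cut of $G$, with $v_i$ the end-vertex of $e_i$ in $A$. Then each of the three graphs $G^A_{(12)}$, $G^A_{(13)}$, $G^A_{(14)}$ is $3$-edge-connected, and in each of them none of the edges $e^A_1,e^A_2,e^A_3,e^A_4$ is contained in a cyclic $3$-edge-cut. Moreover, if $G[A]$ is not a cycle of length four, then at least two of these three graphs are cyclically $4$-edge-connected.
   Context: Graphs may have parallel edges. An edge-cut $E(A,B)$ (edges between parts of a partition of $V(G)$) is a $k$-edge-cut if it has exactly $k$ edges, and cyclic if both $G[A]$ and $G[B]$ contain a cycle; $G$ is cyclically $k$-edge-connected if it has no cyclic edge-cut with fewer than $k$ edges. For a $4$-edge-cut $E(A,B)=\{e_1,\dots,e_4\}$ with $v_i$ the end of $e_i$ in $A$, and $\{i,j,k,\ell\}=\{1,2,3,4\}$: $G^A_{(ij)}$ is the cubic graph obtained from $G[A]$ by adding a new vertex $v_{ij}$ adjacent to $v_i$ and $v_j$, a new vertex $v_{k\ell}$ adjacent to $v_k$ and $v_\ell$, and an edge $e^A_{(ij)}=v_{ij}v_{k\ell}$. For each $m$, $e^A_m$ denotes the edge joining $v_m$ to the new vertex adjacent to it. *)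

theory Defs
  imports Main
begin

text \<open>Finite loopless multigraphs: every edge has a set of exactly two end-vertices;
parallel edges are allowed (distinct edges may have the same ends).\<close>

record ('v, 'e) multigraph =
  verts :: "'v set"
  edges :: "'e set"
  ends  :: "'e \<Rightarrow> 'v set"

definition wf_graph :: "('v, 'e) multigraph \<Rightarrow> bool" where
  "wf_graph G \<longleftrightarrow> finite (verts G) \<and> finite (edges G) \<and>
     (\<forall>e \<in> edges G. ends G e \<subseteq> verts G \<and> card (ends G e) = 2)"

definition degree :: "('v, 'e) multigraph \<Rightarrow> 'v \<Rightarrow> nat" where
  "degree G v = card {e \<in> edges G. v \<in> ends G e}"

definition cubic :: "('v, 'e) multigraph \<Rightarrow> bool" where
  "cubic G \<longleftrightarrow> wf_graph G \<and> (\<forall>v \<in> verts G. degree G v = 3)"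

definition induced :: "('v, 'e) multigraph \<Rightarrow> 'v set \<Rightarrow> ('v, 'e) multigraph" where
  "induced G A = \<lparr>verts = A, edges = {e \<in> edges G. ends G e \<subseteq> A}, ends = ends G\<rparr>"

text \<open>A cycle of length n (n \<ge> 2; length 2 = pair of parallel edges):
distinct vertices vs 0..n-1 and distinct edges es 0..n-1, es i joining vs i and vs (i+1 mod n).\<close>
definition is_cycle_in :: "('v, 'e) multigraph \<Rightarrow> nat \<Rightarrow> (nat \<Rightarrow> 'v) \<Rightarrow> (nat \<Rightarrow> 'e) \<Rightarrow> bool" where
  "is_cycle_in G n vs es \<longleftrightarrow> n \<ge> 2 \<and> inj_on vs {..<n} \<and> inj_on es {..<n} \<and>
     (\<forall>i < n. vs i \<in> verts G \<and> es i \<in> edges G \<and> ends G (es i) = {vs i, vs ((i + 1) mod n)})"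

definition has_cycle :: "('v, 'e) multigraph \<Rightarrow> bool" where
  "has_cycle G \<longleftrightarrow> (\<exists>n vs es. is_cycle_in G n vs es)"

definition is_4cycle :: "('v, 'e) multigraph \<Rightarrow> bool" where
  "is_4cycle G \<longleftrightarrow> (\<exists>vs es. is_cycle_in G 4 vs es \<and>
      vs ` {..<4} = verts G \<and> es ` {..<4} = edges G)"

definition cut :: "('v, 'e) multigraph \<Rightarrow> 'v set \<Rightarrow> 'e set" where
  "cut G A = {e \<in> edges G. ends G e \<inter> A \<noteq> {} \<and> ends G e \<inter> (verts G - A) \<noteq> {}}"

definition cyclic_cut :: "('v, 'e) multigraph \<Rightarrow> 'v set \<Rightarrow> bool" where
  "cyclic_cut G A \<longleftrightarrow> A \<subseteq> verts G \<and> has_cycle (induced G A) \<and> has_cycle (induced G (verts G - A))"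

definition cyc_edge_connected :: "nat \<Rightarrow> ('v, 'e) multigraph \<Rightarrow> bool" where
  "cyc_edge_connected k G \<longleftrightarrow> (\<forall>A. cyclic_cut G A \<longrightarrow> card (cut G A) \<ge> k)"

definition edge_connected :: "nat \<Rightarrow> ('v, 'e) multigraph \<Rightarrow> bool" where
  "edge_connected k G \<longleftrightarrow> (\<forall>A. A \<subseteq> verts G \<and> A \<noteq> {} \<and> A \<noteq> verts G \<longrightarrow> card (cut G A) \<ge> k)"

definition endA :: "('v, 'e) multigraph \<Rightarrow> 'v set \<Rightarrow> 'e \<Rightarrow> 'v" where
  "endA G A e = (THE v. v \<in> ends G e \<inter> A)"

text \<open>G^A_(ij) for a cut E(A,B) whose edges are cs 1, ..., cs 4.
 Vertices: Inl v for v in A; Inr True = v_ij, Inr False = v_kl.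
 Edges: Inl e for edges of G[A]; Inr 0 = e^A_(ij); Inr m = e^A_m (m = 1..4).\<close>
definition GA :: "('v, 'e) multigraph \<Rightarrow> 'v set \<Rightarrow> (nat \<Rightarrow> 'e) \<Rightarrow> nat \<Rightarrow> nat
                   \<Rightarrow> ('v + bool, 'e + nat) multigraph" where
  "GA G A cs i j = \<lparr>verts = Inl ` A \<union> {Inr True, Inr False},
     edges = Inl ` {e \<in> edges G. ends G e \<subseteq> A} \<union> Inr ` {0..4},
     ends = (\<lambda>x. case x of
                Inl e \<Rightarrow> Inl ` ends G e
              | Inr m \<Rightarrow> (if m = 0 then {Inr True, Inr False}
                          else {Inl (endA G A (cs m)), Inr (m = i \<or> m = j)}))\<rparr>"

end

theory Submission
  imports Defs
begin

text \<open>
  Let E(A, B) be a cyclic 4-edge-cut of a cyclically 4-edge-connected cubic graph G and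
  H_j = G^A_(1j). For S \<subseteq> A, the handshake count 3|S| = 2|E(G[S])| + |cut S| and the
  fact that a graph with at least as many edges as vertices contains a cycle show: the cut of
  a nonempty S has at least 3 edges, and at least 4 if |S| \<ge> 2 (otherwise S and V - S \<supseteq> B
  would both span cycles).
  A side X of a cut of H_j may be assumed to avoid v_kl. Its cut is then either the cut of
  its part S in A, or it consists of the edges of G[A] crossing S, the edge e^A_(1j), the edges
  e^A_1, e^A_j attached outside S and the other two attached inside S. Linear arithmetic
  with the bounds for S and A - S shows that this is at least 3, with equality for a cyclic cut
  only if S contains exactly v_1 and v_j among the v_m and is crossed by two edges of G[A];
  then no e^A_m crosses. If this happens for two indices j \<noteq> j', uncrossing the two sides
  by submodularity of the cut function shows |A| = 4 and G[A] a 4-cycle.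
\<close>

definition edges_within :: "('v, 'e) multigraph \<Rightarrow> 'v set \<Rightarrow> 'e set" where
  "edges_within G S = {e \<in> edges G. ends G e \<subseteq> S}"

lemma induced_simps [simp]:
  "verts (induced G S) = S" "edges (induced G S) = edges_within G S" "ends (induced G S) = ends G"
  by (simp_all add: induced_def edges_within_def)

lemma finite_edges_within: "wf_graph G \<Longrightarrow> finite (edges_within G S)"
  by (simp add: wf_graph_def edges_within_def)

lemma wf_graph_induced: "wf_graph G \<Longrightarrow> S \<subseteq> verts G \<Longrightarrow> wf_graph (induced G S)"
  by (auto simp: wf_graph_def edges_within_def intro: finite_subset)

lemma wf_graph_edgeE:
  assumes "wf_graph G" "e \<in> edges G"
  obtains a b where "ends G e = {a, b}" "a \<noteq> b" "a \<in> verts G" "b \<in> verts G"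
  using assms unfolding wf_graph_def by (auto simp: card_2_iff)

lemma has_cycle_induced_mono:
  assumes "has_cycle (induced G S)" "S \<subseteq> T"
  shows "has_cycle (induced G T)"
proof -
  have "is_cycle_in (induced G T) n vs es" if "is_cycle_in (induced G S) n vs es" for n vs es
    using that assms(2) by (auto simp: is_cycle_in_def edges_within_def)
  then show ?thesis using assms(1) unfolding has_cycle_def by blast
qed

lemma has_cycle_of_induced:
  assumes "has_cycle (induced G S)" "S \<subseteq> verts G"
  shows "has_cycle G"
proof -
  have "is_cycle_in G n vs es" if "is_cycle_in (induced G S) n vs es" for n vs es
    using that assms(2) by (auto simp: is_cycle_in_def edges_within_def)
  then show ?thesis using assms(1) unfolding has_cycle_def by blast
qed

lemma has_cycle_induced_card:
  assumes "has_cycle (induced G S)"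
  shows "finite S \<Longrightarrow> 2 \<le> card S" and "wf_graph G \<Longrightarrow> 2 \<le> card (edges_within G S)"
proof -
  obtain n :: nat and vs es where n: "n \<ge> 2" and inj: "inj_on vs {..<n}" "inj_on es {..<n}"
      and mem: "\<forall>i<n. vs i \<in> S \<and> es i \<in> edges_within G S"
    using assms unfolding has_cycle_def is_cycle_in_def by auto
  have neq: "vs 0 \<noteq> vs 1" "es 0 \<noteq> es 1" using inj n by (auto dest: inj_onD)
  have sub: "{vs 0, vs 1} \<subseteq> S" "{es 0, es 1} \<subseteq> edges_within G S" using mem n by auto
  show "2 \<le> card S" if "finite S"
    using card_mono[OF that sub(1)] neq(1) by simp
  show "2 \<le> card (edges_within G S)" if "wf_graph G"
    using card_mono[OF finite_edges_within[OF that] sub(2)] neq(2) by simp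
qed

text \<open>Double counting of edge-vertex incidences: every edge inside S is counted twice,
  every edge of the cut of S once.\<close>
lemma degree_sum:
  assumes wf: "wf_graph G" and S: "S \<subseteq> verts G"
  shows "(\<Sum>v\<in>S. degree G v) = 2 * card (edges_within G S) + card (cut G S)"
proof -
  have finE: "finite (edges G)" and finS: "finite S"
    using wf S by (auto simp: wf_graph_def intro: finite_subset)
  have incident: "card {v \<in> S. v \<in> ends G e} = 2 * of_bool (e \<in> edges_within G S) + of_bool (e \<in> cut G S)"
    if e: "e \<in> edges G" for e
  proof -
    obtain a b where ab: "ends G e = {a, b}" "a \<noteq> b" "a \<in> verts G" "b \<in> verts G"
      using wf_graph_edgeE[OF wf e] .
    have "{v \<in> S. v \<in> ends G e} = S \<inter> {a, b}" using ab(1) by auto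
    then show ?thesis using ab e by (auto simp: cut_def edges_within_def card_insert_if)
  qed
  have "(\<Sum>v\<in>S. degree G v) = (\<Sum>v\<in>S. \<Sum>e\<in>edges G. of_bool (v \<in> ends G e))"
    using finE by (simp add: degree_def Int_def conj_commute)
  also have "\<dots> = (\<Sum>e\<in>edges G. \<Sum>v\<in>S. of_bool (v \<in> ends G e))"
    by (rule sum.swap)
  also have "\<dots> = (\<Sum>e\<in>edges G. 2 * of_bool (e \<in> edges_within G S) + of_bool (e \<in> cut G S))"
    using finS incident by (intro sum.cong) (simp_all add: Int_def conj_commute)
  also have "\<dots> = 2 * card (edges_within G S) + card (cut G S)"
    using finE by (simp add: sum.distrib sum_distrib_left Int_def edges_within_def cut_def conj_commute)
  finally show ?thesis .
qed

lemma cubic_handshake: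
  assumes "cubic G" "S \<subseteq> verts G"
  shows "3 * card S = 2 * card (edges_within G S) + card (cut G S)"
proof -
  have "(\<Sum>v\<in>S. degree G v) = (\<Sum>v\<in>S. 3)"
    using assms by (intro sum.cong) (auto simp: cubic_def)
  then show ?thesis using degree_sum[of G S] assms by (simp add: cubic_def)
qed

text \<open>Submodularity of the cut function, obtained from the degree sum: degree sums are
  modular, and edges within S \<inter> T or S \<union> T are at least those within S or T.\<close>
lemma cut_submodular:
  assumes wf: "wf_graph G" and S: "S \<subseteq> verts G" and T: "T \<subseteq> verts G"
  shows "card (cut G (S \<inter> T)) + card (cut G (S \<union> T)) \<le> card (cut G S) + card (cut G T)"
proof -
  let ?E = "edges_within G"
  have fin: "finite (?E U)" for U using finite_edges_within[OF wf] .
  have finS: "finite S" "finite T" using wf S T by (auto simp: wf_graph_def intro: finite_subset)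
  have "?E (S \<inter> T) = ?E S \<inter> ?E T" "?E S \<union> ?E T \<subseteq> ?E (S \<union> T)"
    by (auto simp: edges_within_def)
  then have "card (?E S) + card (?E T) \<le> card (?E (S \<inter> T)) + card (?E (S \<union> T))"
    using card_Un_Int[OF fin fin, of S T] card_mono[OF fin, of "?E S \<union> ?E T" "S \<union> T"] by simp
  moreover have "(\<Sum>v\<in>S \<inter> T. degree G v) + (\<Sum>v\<in>S \<union> T. degree G v)
      = (\<Sum>v\<in>S. degree G v) + (\<Sum>v\<in>T. degree G v)"
    using sum.union_inter[OF finS, of "degree G"] by (simp add: add.commute)
  moreover have "S \<inter> T \<subseteq> verts G" "S \<union> T \<subseteq> verts G" using S T by auto
  ultimately show ?thesis
    using degree_sum[OF wf] S T by simp
qed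

lemma cut_compl: "X \<subseteq> verts G \<Longrightarrow> cut G (verts G - X) = cut G X"
  unfolding cut_def by (auto simp: double_diff)

lemma other_end:
  assumes "wf_graph G" "e \<in> edges G" "v \<in> ends G e"
  shows "\<exists>w. ends G e = {v, w} \<and> w \<noteq> v \<and> w \<in> verts G"
  using wf_graph_edgeE[OF assms(1,2)] assms(3) by (metis doubleton_eq_iff insertE singletonD)

lemma another_edge:
  assumes "2 \<le> degree G v"
  shows "\<exists>e'. e' \<in> edges G \<and> v \<in> ends G e' \<and> e' \<noteq> e"
proof -
  obtain x y where "x \<in> edges G" "v \<in> ends G x" "y \<in> edges G" "v \<in> ends G y" "x \<noteq> y"
    using assms by (auto simp: degree_def numeral_2_eq_2 card_le_Suc_iff)
  then show ?thesis by metis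
qed

lemma nonbacktracking_walk:
  assumes wf: "wf_graph G" and ne: "verts G \<noteq> {}" and deg: "\<forall>v\<in>verts G. 2 \<le> degree G v"
  obtains W :: "nat \<Rightarrow> 'v" and F :: "nat \<Rightarrow> 'e"
  where "\<And>n. W n \<in> verts G" "\<And>n. F n \<in> edges G" "\<And>n. ends G (F n) = {W n, W (Suc n)}"
    "\<And>n. W n \<noteq> W (Suc n)" "\<And>n. F (Suc n) \<noteq> F n"
proof -
  define other where "other e v = (SOME w. ends G e = {v, w} \<and> w \<noteq> v \<and> w \<in> verts G)" for e v
  define next_edge where "next_edge e v = (SOME e'. e' \<in> edges G \<and> v \<in> ends G e' \<and> e' \<noteq> e)" for e v
  have other: "ends G e = {v, other e v} \<and> other e v \<noteq> v \<and> other e v \<in> verts G"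
    if "e \<in> edges G" "v \<in> ends G e" for e v
    unfolding other_def by (rule someI_ex, rule other_end[OF wf that])
  have next_edge: "next_edge e v \<in> edges G \<and> v \<in> ends G (next_edge e v) \<and> next_edge e v \<noteq> e"
    if "v \<in> verts G" for e v
    unfolding next_edge_def by (rule someI_ex, rule another_edge) (use deg that in blast)
  obtain v0 where v0: "v0 \<in> verts G" using ne by auto
  obtain e0 where e0: "e0 \<in> edges G" "v0 \<in> ends G e0" using next_edge[OF v0] by blast
  define walk where "walk = rec_nat (v0, e0) (\<lambda>_ (v, e). (other e v, next_edge e (other e v)))"
  define W where "W n = fst (walk n)" for n
  define F where "F n = snd (walk n)" for n
  have W_Suc: "W (Suc n) = other (F n) (W n)" and F_Suc: "F (Suc n) = next_edge (F n) (W (Suc n))" for n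
    by (simp_all add: W_def F_def walk_def split: prod.splits)
  have inv: "W n \<in> verts G \<and> F n \<in> edges G \<and> W n \<in> ends G (F n)" for n
  proof (induction n)
    case 0
    then show ?case using v0 e0 by (simp add: W_def F_def walk_def)
  next
    case (Suc n)
    then have "W (Suc n) \<in> verts G" using other W_Suc by simp
    then show ?case using next_edge F_Suc by simp
  qed
  show ?thesis
  proof
    show "W n \<in> verts G" "F n \<in> edges G" for n using inv by blast+
    show "ends G (F n) = {W n, W (Suc n)}" "W n \<noteq> W (Suc n)" for n
      using inv other W_Suc by (simp, metis)
    show "F (Suc n) \<noteq> F n" for n using next_edge inv F_Suc by simp
  qed
qed

lemma first_repetition:
  fixes W :: "nat \<Rightarrow> 'a"
  assumes "finite (range W)"
  obtains i J where "i < J" "W i = W J" "inj_on W {..<J}"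
proof -
  have "\<not> inj W" using assms by (auto simp: finite_image_iff)
  then have ex: "\<exists>J. \<exists>i<J. W i = W J"
    unfolding inj_def by (metis linorder_neqE_nat)
  define J where "J = (LEAST J. \<exists>i<J. W i = W J)"
  obtain i where "i < J" "W i = W J"
    using LeastI_ex[where P = "\<lambda>J. \<exists>i<J. W i = W J", OF ex] unfolding J_def by blast
  moreover have "inj_on W {..<J}"
  proof (rule inj_onI, rule ccontr)
    fix a b assume "a \<in> {..<J}" "b \<in> {..<J}" "W a = W b" "a \<noteq> b"
    then have "\<exists>y<J. \<exists>x<y. W x = W y" by (metis lessThan_iff linorder_neqE_nat)
    then show False unfolding J_def using not_less_Least by blast
  qed
  ultimately show ?thesis using that by blast
qed

text \<open>Between a first repetition W i = W J of a non-backtracking walk, no edge is used twice: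
  a repeated edge would force a repeated vertex before J or an immediate reversal.\<close>
lemma closed_walk_edges_distinct:
  assumes ends: "\<And>n. ends G (F n) = {W n, W (Suc n)}" and nb: "\<And>n. F (Suc n) \<noteq> F n"
    and inj: "inj_on W {..<J}" and i: "i < J" "W i = W J"
    and kk: "i \<le> k" "k < k'" "k' < J"
  shows "F k \<noteq> F k'"
proof
  assume eq: "F k = F k'"
  have injW: "a = b" if "a < J" "b < J" "W a = W b" for a b
    using inj that by (auto dest: inj_onD)
  have "W k \<noteq> W k'" using injW[of k k'] kk by auto
  then have swap: "W k = W (Suc k')" "W (Suc k) = W k'"
    using eq ends[of k] ends[of k'] by (auto simp: doubleton_eq_iff)
  then have k': "k' = Suc k" using injW[of "Suc k" k'] kk by simp
  show False
  proof (cases "Suc k' < J")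
    case True
    then show False using injW[of k "Suc k'"] swap(1) k' by simp
  next
    case False
    then have "W k = W i" using swap(1) kk i(2) by (metis Suc_lessI)
    then have "k = i" using injW[of k i] kk i(1) by simp
    then show False using eq k' nb[of i] by simp
  qed
qed

text \<open>Hence the segment of the walk between its first repetition is a cycle.\<close>
lemma has_cycle_of_nonbacktracking_walk:
  assumes fin: "finite (verts G)"
    and W: "\<And>n. W n \<in> verts G" and F: "\<And>n. F n \<in> edges G"
    and ends: "\<And>n. ends G (F n) = {W n, W (Suc n)}"
    and step: "\<And>n. W n \<noteq> W (Suc n)" and nb: "\<And>n. F (Suc n) \<noteq> F n"
  shows "has_cycle G"
proof -
  have "finite (range W)" using W fin finite_subset by (metis image_subset_iff)
  then obtain i J where i: "i < J" "W i = W J" and inj: "inj_on W {..<J}"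
    by (rule first_repetition)
  define n where "n = J - i"
  define vs where "vs k = W (i + k)" for k
  define es where "es k = F (i + k)" for k
  have n: "n \<ge> 2"
  proof -
    have "J \<noteq> Suc i" using i step[of i] by auto
    then show ?thesis using i unfolding n_def by linarith
  qed
  have closes: "W (i + n) = W i" using i unfolding n_def by simp
  have es_ends: "ends G (es k) = {vs k, vs ((k + 1) mod n)}" if "k < n" for k
  proof (cases "k + 1 < n")
    case True
    then show ?thesis using ends[of "i + k"] by (simp add: vs_def es_def)
  next
    case False
    then have "k + 1 = n" using that by simp
    then have "W (Suc (i + k)) = W i" using closes by (metis add_Suc_right Suc_eq_plus1)
    then show ?thesis using ends[of "i + k"] \<open>k + 1 = n\<close> by (simp add: vs_def es_def)
  qed
  have es_neq: "es k \<noteq> es k'" if "k < k'" "k' < n" for k k'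
    using closed_walk_edges_distinct[OF ends nb inj i, of "i + k" "i + k'"] that
    unfolding es_def n_def by simp
  have "is_cycle_in G n vs es"
    unfolding is_cycle_in_def
  proof (intro conjI allI impI)
    show "inj_on vs {..<n}"
      using inj unfolding inj_on_def vs_def n_def by (metis add_left_cancel lessThan_iff less_diff_conv add.commute)
    show "inj_on es {..<n}"
      using es_neq by (metis inj_onI lessThan_iff linorder_neqE_nat)
  qed (use n W F es_ends in \<open>auto simp: vs_def es_def\<close>)
  then show ?thesis unfolding has_cycle_def by blast
qed

lemma has_cycle_of_min_degree_2:
  assumes wf: "wf_graph G" and "verts G \<noteq> {}" and "\<forall>v\<in>verts G. 2 \<le> degree G v"
  shows "has_cycle G"
proof -
  obtain W F where walk: "\<And>n. W n \<in> verts G" "\<And>n. F n \<in> edges G"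
    "\<And>n. ends G (F n) = {W n, W (Suc n)}" "\<And>n. W n \<noteq> W (Suc n)" "\<And>n. F (Suc n) \<noteq> F n"
    using nonbacktracking_walk[OF assms] by blast
  have "finite (verts G)" using wf by (simp add: wf_graph_def)
  then show ?thesis using has_cycle_of_nonbacktracking_walk walk by blast
qed

text \<open>A nonempty graph with at least as many edges as vertices has a cycle: delete
  vertices of degree at most 1 until the minimum degree is 2.\<close>
lemma has_cycle_if_card_verts_le_card_edges:
  "wf_graph G \<Longrightarrow> verts G \<noteq> {} \<Longrightarrow> card (verts G) \<le> card (edges G) \<Longrightarrow> has_cycle G"
proof (induction "card (verts G)" arbitrary: G rule: less_induct)
  case less
  show ?case
  proof (cases "\<forall>v\<in>verts G. 2 \<le> degree G v")
    case True
    then show ?thesis using has_cycle_of_min_degree_2 less.prems by blast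
  next
    case False
    then obtain v where v: "v \<in> verts G" "degree G v \<le> 1" by force
    define G' where "G' = induced G (verts G - {v})"
    have finV: "finite (verts G)" and finE: "finite (edges G)"
      using less.prems(1) by (auto simp: wf_graph_def)
    have edges_split: "edges G \<subseteq> edges G' \<union> {e \<in> edges G. v \<in> ends G e}"
      using less.prems(1) by (auto simp: G'_def edges_within_def wf_graph_def)
    have "card (edges G) \<le> card (edges G') + card {e \<in> edges G. v \<in> ends G e}"
      using card_mono[OF _ edges_split] card_Un_le[of "edges G'"] finE
      by (simp add: G'_def finite_edges_within[OF less.prems(1)]) (meson le_trans)
    then have card_edges: "card (edges G) \<le> card (edges G') + 1"
      using v(2) unfolding degree_def by linarith
    have card_verts: "card (verts G') = card (verts G) - 1"
      using v(1) finV by (simp add: G'_def)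
    show ?thesis
    proof (cases "verts G' = {}")
      case True
      then have "verts G = {v}" using v(1) by (auto simp: G'_def)
      have "edges G = {}"
      proof (rule ccontr)
        assume "edges G \<noteq> {}"
        then obtain e where "e \<in> edges G" by blast
        then obtain a b where "a \<noteq> b" "a \<in> verts G" "b \<in> verts G"
          using wf_graph_edgeE[OF less.prems(1)] by metis
        then show False using \<open>verts G = {v}\<close> by auto
      qed
      then have False using less.prems(3) \<open>verts G = {v}\<close> by simp
      then show ?thesis ..
    next
      case False
      have "card (verts G) > 0" using v(1) finV card_gt_0_iff by blast
      then have "card (verts G') < card (verts G)" using card_verts by linarith
      moreover have "wf_graph G'"
        unfolding G'_def by (rule wf_graph_induced[OF less.prems(1)]) blast
      moreover have "card (verts G') \<le> card (edges G')"
        using card_edges card_verts less.prems(3) by linarith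
      ultimately have "has_cycle G'" using less.hyps False by blast
      then show ?thesis unfolding G'_def by (rule has_cycle_of_induced) blast
    qed
  qed
qed

lemma is_4cycle_intro:
  assumes wf: "wf_graph G" and A: "A = {w0, w1, w2, w3}" and dist: "distinct [w0, w1, w2, w3]"
    and e: "ends G e0 = {w0, w1}" "ends G e1 = {w1, w2}" "ends G e2 = {w2, w3}" "ends G e3 = {w3, w0}"
    and E: "{e0, e1, e2, e3} \<subseteq> edges G" and card_E: "card (edges_within G A) = 4"
  shows "is_4cycle (induced G A)"
proof -
  define vs where "vs = (!) [w0, w1, w2, w3]"
  define es where "es = (!) [e0, e1, e2, e3]"
  have four: "{..<4::nat} = {0, 1, 2, 3}" by auto
  have "distinct [e0, e1, e2, e3]"
    using dist e by (auto simp: doubleton_eq_iff)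
  then have inj: "inj_on vs {..<4}" "inj_on es {..<4}"
    using dist unfolding vs_def es_def by (auto intro!: inj_on_nth)
  have "es ` {..<4} \<subseteq> edges_within G A"
    using E e A by (auto simp: es_def four edges_within_def)
  moreover have "card (es ` {..<4}) = 4" using card_image[OF inj(2)] by simp
  ultimately have edges_A: "es ` {..<4} = edges_within G A"
    using card_E finite_edges_within[OF wf] by (metis card_subset_eq)
  have "is_cycle_in (induced G A) 4 vs es"
    unfolding is_cycle_in_def
  proof (intro conjI allI impI inj)
    fix i :: nat assume "i < 4"
    then have "i = 0 \<or> i = 1 \<or> i = 2 \<or> i = 3" by auto
    then show "vs i \<in> verts (induced G A)" "es i \<in> edges (induced G A)"
      "ends (induced G A) (es i) = {vs i, vs ((i + 1) mod 4)}"
      using edges_A A e by (auto simp: vs_def es_def four)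
  qed simp
  moreover have "vs ` {..<4} = verts (induced G A)" using A by (auto simp: vs_def four)
  ultimately show ?thesis using edges_A unfolding is_4cycle_def by auto
qed

text \<open>For a side S of G[A] with s = |S|,
  r = |A - S|, a inner crossing edges, p of the cut edges e_1, e_j and q of the other two
  attached in S, the cut bounds for S and A - S give the bound for the cut of H_j, with
  equality only in the balanced configuration.\<close>
lemma pair_side_arith:
  fixes a p q s r :: nat
  assumes "p \<le> 2" "q \<le> 2" "s + r \<ge> 3"
    and "s = 0 \<Longrightarrow> p = 0" "r = 0 \<Longrightarrow> p = 2 \<and> q = 2"
    and "s \<ge> 1 \<Longrightarrow> a + p + q \<ge> 3" "s \<ge> 2 \<Longrightarrow> a + p + q \<ge> 4"
    and "r \<ge> 1 \<Longrightarrow> a + (2 - p) + (2 - q) \<ge> 3" "r \<ge> 2 \<Longrightarrow> a + (2 - p) + (2 - q) \<ge> 4"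
  shows "3 \<le> a + 1 + (2 - p) + q"
    and "s \<ge> 1 \<Longrightarrow> r \<ge> 1 \<Longrightarrow> a + 1 + (2 - p) + q \<le> 3 \<Longrightarrow> p = 2 \<and> q = 0 \<and> a = 2"
proof -
  consider "s = 0" | "r = 0" | "s \<ge> 1" "r \<ge> 1" "s \<ge> 2 \<or> r \<ge> 2"
    using assms(3) by linarith
  then show "3 \<le> a + 1 + (2 - p) + q"
    by cases (use assms in linarith)+
  show "p = 2 \<and> q = 0 \<and> a = 2" if "s \<ge> 1" "r \<ge> 1" "a + 1 + (2 - p) + q \<le> 3"
  proof (cases "s \<ge> 2")
    case True
    then show ?thesis using that assms(1,2,6-9) by linarith
  next
    case False
    then show ?thesis using that assms(1-3,6-9) by linarith
  qed
qed

locale cyclic_four_cut =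
  fixes G :: "('v, 'e) multigraph" and A :: "'v set" and cs :: "nat \<Rightarrow> 'e"
  assumes cubic: "cubic G" and cyc4: "cyc_edge_connected 4 G" and cyclic: "cyclic_cut G A"
    and card_cut_A: "card (cut G A) = 4" and inj_cs: "inj_on cs {1..4}"
    and cs_cut: "cs ` {1..4} = cut G A"
begin

definition attach :: "nat \<Rightarrow> 'v" where
  "attach m = endA G A (cs m)"

definition hits :: "'v set \<Rightarrow> nat set \<Rightarrow> nat" where
  "hits S M = card {m \<in> M. attach m \<in> S}"

abbreviation inner_cut :: "'v set \<Rightarrow> 'e set" where
  "inner_cut S \<equiv> cut (induced G A) S"

lemma wf: "wf_graph G"
  using cubic by (simp add: cubic_def)

lemma A_verts: "A \<subseteq> verts G"
  using cyclic by (simp add: cyclic_cut_def)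

lemma finite_A: "finite A"
  using A_verts wf finite_subset by (auto simp: wf_graph_def)

lemma finite_inner_cut: "finite (inner_cut S)"
  using wf by (simp add: cut_def finite_edges_within)

lemma attach:
  assumes "m \<in> {1..4}"
  shows "cs m \<in> edges G" "ends G (cs m) \<inter> A = {attach m}" "attach m \<in> A" "\<not> ends G (cs m) \<subseteq> A"
proof -
  have e: "cs m \<in> edges G" "ends G (cs m) \<inter> A \<noteq> {}" "ends G (cs m) \<inter> (verts G - A) \<noteq> {}"
    using assms cs_cut by (auto simp: cut_def)
  obtain a b where ab: "ends G (cs m) = {a, b}" "a \<noteq> b"
    using wf_graph_edgeE[OF wf e(1)] by metis
  then obtain u where u: "ends G (cs m) \<inter> A = {u}"
    using e(2,3) by (cases "a \<in> A"; cases "b \<in> A") auto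
  then have "attach m = u" unfolding attach_def endA_def by auto
  then show "cs m \<in> edges G" "ends G (cs m) \<inter> A = {attach m}" "attach m \<in> A" "\<not> ends G (cs m) \<subseteq> A"
    using e u by auto
qed

lemma cut_inside_A:
  assumes S: "S \<subseteq> A"
  shows "cut G S = inner_cut S \<union> cs ` {m \<in> {1..4}. attach m \<in> S}"
proof (intro equalityI subsetI)
  fix e assume e: "e \<in> cut G S"
  then have ends_sub: "ends G e \<subseteq> verts G"
    using wf by (auto simp: cut_def wf_graph_def)
  show "e \<in> inner_cut S \<union> cs ` {m \<in> {1..4}. attach m \<in> S}"
  proof (cases "ends G e \<subseteq> A")
    case True
    then show ?thesis using e by (auto simp: cut_def edges_within_def)
  next
    case False
    then have "e \<in> cut G A" using e S ends_sub by (auto simp: cut_def)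
    then obtain m where m: "m \<in> {1..4}" "e = cs m" using cs_cut by (metis imageE)
    have "ends G (cs m) \<inter> S \<subseteq> {attach m}" using S attach(2)[OF m(1)] by blast
    moreover have "ends G (cs m) \<inter> S \<noteq> {}" using e m(2) by (auto simp: cut_def)
    ultimately have "attach m \<in> S" by blast
    then show ?thesis using m by auto
  qed
next
  fix e assume "e \<in> inner_cut S \<union> cs ` {m \<in> {1..4}. attach m \<in> S}"
  then show "e \<in> cut G S"
  proof
    assume "e \<in> inner_cut S"
    then show ?thesis using A_verts by (auto simp: cut_def edges_within_def)
  next
    assume "e \<in> cs ` {m \<in> {1..4}. attach m \<in> S}"
    then obtain m where m: "m \<in> {1..4}" "attach m \<in> S" "e = cs m" by auto
    then obtain w where "w \<in> ends G e" "w \<notin> A" using attach(4)[OF m(1)] by auto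
    moreover have "ends G e \<subseteq> verts G" using attach(1)[OF m(1)] wf m(3) by (auto simp: wf_graph_def)
    ultimately show ?thesis using m attach(1,2)[OF m(1)] S by (auto simp: cut_def)
  qed
qed

lemma card_cut_inside_A:
  assumes "S \<subseteq> A"
  shows "card (cut G S) = card (inner_cut S) + hits S {1..4}"
proof -
  have "inner_cut S \<inter> cs ` {m \<in> {1..4}. attach m \<in> S} = {}"
    using attach(4) by (auto simp: cut_def edges_within_def)
  moreover have "card (cs ` {m \<in> {1..4}. attach m \<in> S}) = hits S {1..4}"
    unfolding hits_def by (rule card_image) (rule inj_on_subset[OF inj_cs], auto)
  ultimately show ?thesis
    unfolding cut_inside_A[OF assms] by (simp add: card_Un_disjoint finite_inner_cut)
qed

lemma inner_cut_compl: "S \<subseteq> A \<Longrightarrow> inner_cut (A - S) = inner_cut S"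
  using cut_compl[of S "induced G A"] by simp

lemma hits_split: "M \<subseteq> N \<Longrightarrow> finite N \<Longrightarrow> hits S N = hits S M + hits S (N - M)"
proof -
  assume "M \<subseteq> N" "finite N"
  then have "{m \<in> N. attach m \<in> S} = {m \<in> M. attach m \<in> S} \<union> {m \<in> N - M. attach m \<in> S}"
    and "finite {m \<in> M. attach m \<in> S}" "finite {m \<in> N - M. attach m \<in> S}"
    using finite_subset[of _ N] by auto
  then show ?thesis unfolding hits_def by (subst card_Un_disjoint[symmetric]) auto
qed

text \<open>Every v_m lies in A, so v_m lies outside S exactly when it lies in A - S.\<close>
lemma hits_compl: "M \<subseteq> {1..4} \<Longrightarrow> hits (A - S) M = card M - hits S M"
proof -
  assume M: "M \<subseteq> {1..4}"
  then have "{m \<in> M. attach m \<in> A - S} = M - {m \<in> M. attach m \<in> S}"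
    using attach(3) by auto
  then show ?thesis
    unfolding hits_def using M finite_subset[OF M] by (simp add: card_Diff_subset)
qed

lemma hits_le_card: "finite M \<Longrightarrow> hits S M \<le> card M"
  unfolding hits_def by (rule card_mono) auto

lemma hits_pattern:
  assumes "N \<subseteq> M" "\<forall>m\<in>M. attach m \<in> S \<longleftrightarrow> m \<in> N"
  shows "hits S M = card N"
  unfolding hits_def using assms by (intro arg_cong[where f = card]) auto

lemma hits_A: "M \<subseteq> {1..4} \<Longrightarrow> hits A M = card M"
  using hits_pattern[of M M A] attach(3) by blast

text \<open>The key use of cyclic 4-edge-connectivity: a nonempty S \<subseteq> A with a small cut
  would span a cycle by the handshake count, while V - S contains the cycle of G[B].\<close>
lemma cut_bound_in_A:
  assumes S: "S \<subseteq> A" "S \<noteq> {}"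
  shows "4 \<le> card (cut G S) \<or> card S + 2 \<le> card (cut G S)"
proof (rule ccontr)
  assume small: "\<not> ?thesis"
  have SV: "S \<subseteq> verts G" using S A_verts by blast
  then have "card S \<le> card (edges_within G S)"
    using cubic_handshake[OF cubic SV] small by linarith
  then have "has_cycle (induced G S)"
    using has_cycle_if_card_verts_le_card_edges[OF wf_graph_induced[OF wf SV]] S(2) by simp
  moreover have "has_cycle (induced G (verts G - S))"
    using cyclic has_cycle_induced_mono[of G "verts G - A" "verts G - S"] S(1)
    by (auto simp: cyclic_cut_def)
  ultimately have "cyclic_cut G S" using SV by (simp add: cyclic_cut_def)
  then show False using cyc4 small by (auto simp: cyc_edge_connected_def)
qed

lemma cut_ge_3_in_A: "S \<subseteq> A \<Longrightarrow> S \<noteq> {} \<Longrightarrow> 3 \<le> card (cut G S)"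
  using cut_bound_in_A[of S] finite_subset[OF _ finite_A, of S] card_gt_0_iff[of S] by linarith

lemma cut_ge_4_in_A:
  assumes "S \<subseteq> A" "2 \<le> card S"
  shows "4 \<le> card (cut G S)"
proof -
  have "S \<noteq> {}" using assms(2) by auto
  then show ?thesis using cut_bound_in_A[OF assms(1)] assms(2) by linarith
qed

text \<open>G[A] contains a cycle, so it has at least two edges and hence at least three vertices.\<close>
lemma card_A_ge_3: "3 \<le> card A"
proof -
  have "2 \<le> card (edges_within G A)"
    using has_cycle_induced_card(2)[OF _ wf] cyclic by (simp add: cyclic_cut_def)
  then show ?thesis using cubic_handshake[OF cubic A_verts] card_cut_A by linarith
qed

lemma edge_of_pair:
  assumes "u \<in> A" "w \<in> A" "u \<noteq> w" "card (cut G {u, w}) = 4"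
  obtains e where "e \<in> edges G" "ends G e = {u, w}"
proof -
  have "{u, w} \<subseteq> verts G" using assms A_verts by auto
  moreover have "card {u, w} = 2" using assms(3) by simp
  ultimately have "card (edges_within G {u, w}) = 1"
    using cubic_handshake[OF cubic, of "{u, w}"] assms(4) by linarith
  then obtain e where e: "edges_within G {u, w} = {e}" by (rule card_1_singletonE)
  then have "e \<in> edges G" "ends G e \<subseteq> {u, w}" by (auto simp: edges_within_def)
  moreover have "card (ends G e) = card {u, w}"
    using wf calculation(1) assms(3) by (simp add: wf_graph_def)
  ultimately show ?thesis using that card_subset_eq[of "{u, w}" "ends G e"] by auto
qed

lemma pair_side_counts:
  assumes j: "j \<in> {2, 3, 4}" and S: "S \<subseteq> A"
  defines "P \<equiv> {1, j}" and "Q \<equiv> {1..4} - {1, j}"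
  shows "hits S P \<le> 2" "hits S Q \<le> 2" "hits (A - S) P = 2 - hits S P"
    "card (cut G S) = card (inner_cut S) + hits S P + hits S Q"
    "card (cut G (A - S)) = card (inner_cut S) + (2 - hits S P) + (2 - hits S Q)"
proof -
  have PQ: "P \<subseteq> {1..4}" "Q = {1..4} - P" "card P = 2" "card Q = 2" "finite P" "finite Q"
    using j unfolding P_def Q_def by auto
  show "hits S P \<le> 2" "hits S Q \<le> 2"
    using PQ hits_le_card[of P S] hits_le_card[of Q S] by auto
  show hits_P: "hits (A - S) P = 2 - hits S P"
    using hits_compl PQ by auto
  have hits_Q: "hits (A - S) Q = 2 - hits S Q"
    using hits_compl PQ by auto
  show "card (cut G S) = card (inner_cut S) + hits S P + hits S Q"
    using card_cut_inside_A[OF S] hits_split[OF PQ(1)] PQ(2) by simp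
  have "hits (A - S) {1..4} = hits (A - S) P + hits (A - S) Q"
    using hits_split[OF PQ(1)] PQ(2) by simp
  moreover have "card (cut G (A - S)) = card (inner_cut S) + hits (A - S) {1..4}"
    using card_cut_inside_A[of "A - S"] inner_cut_compl[OF S] by simp
  ultimately show "card (cut G (A - S)) = card (inner_cut S) + (2 - hits S P) + (2 - hits S Q)"
    unfolding hits_P hits_Q by linarith
qed

lemma pair_side_bound:
  assumes j: "j \<in> {2, 3, 4}" and S: "S \<subseteq> A"
  defines "P \<equiv> {1, j}" and "Q \<equiv> {1..4} - {1, j}"
  shows "3 \<le> card (inner_cut S) + 1 + hits (A - S) P + hits S Q"
    and "S \<noteq> {} \<Longrightarrow> S \<noteq> A \<Longrightarrow> card (inner_cut S) + 1 + hits (A - S) P + hits S Q \<le> 3 \<Longrightarrow>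
           (\<forall>m\<in>{1..4}. attach m \<in> S \<longleftrightarrow> m \<in> P) \<and> card (inner_cut S) = 2"
proof -
  have PQ: "P \<subseteq> {1..4}" "Q \<subseteq> {1..4}" "Q = {1..4} - P" "card P = 2" "card Q = 2"
    "finite P" "finite Q"
    using j unfolding P_def Q_def by auto
  define a p q where "a = card (inner_cut S)" and "p = hits S P" and "q = hits S Q"
  note counts = pair_side_counts[OF j S, folded P_def Q_def, folded a_def p_def q_def]
  have finS: "finite S" using S finite_A finite_subset by blast
  have sr: "card S + card (A - S) \<ge> 3"
    using card_A_ge_3 card_Diff_subset[OF finS S] card_mono[OF finite_A S] by linarith
  have s0: "card S = 0 \<Longrightarrow> p = 0" using finS unfolding p_def hits_def by simp
  have r0: "p = 2 \<and> q = 2" if "card (A - S) = 0"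
  proof -
    have "S = A" using that finite_A S by auto
    then show ?thesis using hits_A[OF PQ(1)] hits_A[OF PQ(2)] PQ(4,5) unfolding p_def q_def by simp
  qed
  have s12: "card S \<ge> 1 \<Longrightarrow> a + p + q \<ge> 3" "card S \<ge> 2 \<Longrightarrow> a + p + q \<ge> 4"
    using cut_ge_3_in_A[OF S] cut_ge_4_in_A[OF S] counts(4) by (auto simp: Suc_le_eq card_gt_0_iff)
  have r12: "card (A - S) \<ge> 1 \<Longrightarrow> a + (2 - p) + (2 - q) \<ge> 3"
    "card (A - S) \<ge> 2 \<Longrightarrow> a + (2 - p) + (2 - q) \<ge> 4"
    using cut_ge_3_in_A[of "A - S"] cut_ge_4_in_A[of "A - S"] counts(5)
    by (auto simp: Suc_le_eq card_gt_0_iff)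
  note arith = pair_side_arith[OF counts(1,2) sr s0 r0 s12 r12]
  then show "3 \<le> card (inner_cut S) + 1 + hits (A - S) P + hits S Q"
    unfolding a_def q_def counts(3) by simp
  assume "S \<noteq> {}" "S \<noteq> A" and le3: "card (inner_cut S) + 1 + hits (A - S) P + hits S Q \<le> 3"
  then have "card S \<ge> 1" "card (A - S) \<ge> 1"
    using finS finite_A S by (auto simp: Suc_le_eq card_gt_0_iff)
  then have pqa: "p = 2" "q = 0" "a = 2"
    using arith(2) le3 unfolding a_def q_def counts(3) by auto
  have "{m \<in> P. attach m \<in> S} = P"
    using pqa(1) PQ(4,6) unfolding p_def hits_def by (intro card_subset_eq) auto
  moreover have "{m \<in> Q. attach m \<in> S} = {}"
    using pqa(2) PQ(7) unfolding q_def hits_def by simp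
  ultimately have "\<forall>m\<in>{1..4}. attach m \<in> S \<longleftrightarrow> m \<in> P"
    using PQ(3) by blast
  then show "(\<forall>m\<in>{1..4}. attach m \<in> S \<longleftrightarrow> m \<in> P) \<and> card (inner_cut S) = 2"
    using pqa(3) unfolding a_def by blast
qed

definition H :: "nat \<Rightarrow> ('v + bool, 'e + nat) multigraph" where
  "H j = GA G A cs 1 j"

lemma H_simps:
  "verts (H j) = Inl ` A \<union> {Inr True, Inr False}"
  "edges (H j) = Inl ` edges_within G A \<union> Inr ` {0..4}"
  "ends (H j) (Inl e) = Inl ` ends G e"
  "ends (H j) (Inr m) =
     (if m = 0 then {Inr True, Inr False} else {Inl (attach m), Inr (m = 1 \<or> m = j)})"
  by (simp_all add: H_def GA_def attach_def edges_within_def)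

lemma Inl_in_cut_H:
  assumes "X \<subseteq> verts (H j)"
  shows "Inl e \<in> cut (H j) X \<longleftrightarrow> e \<in> inner_cut (Inl -` X)"
proof -
  have "Inl ` ends G e \<inter> (verts (H j) - X) \<noteq> {} \<longleftrightarrow> ends G e \<inter> (A - Inl -` X) \<noteq> {}"
    if "ends G e \<subseteq> A" using that by (auto simp: H_simps)
  then show ?thesis by (auto simp: cut_def H_simps edges_within_def)
qed

lemma Inr_in_cut_H:
  assumes X: "X \<subseteq> verts (H j)" "Inr False \<notin> X"
  shows "Inr m \<in> cut (H j) X \<longleftrightarrow> (m = 0 \<and> Inr True \<in> X) \<or>
    (m \<in> {1..4} \<and> (attach m \<in> Inl -` X) \<noteq> (Inr True \<in> X \<and> m \<in> {1, j}))"
proof (cases "m \<in> {1..4}")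
  case True
  have "Inr (m = 1 \<or> m = j) \<in> X \<longleftrightarrow> Inr True \<in> X \<and> m \<in> {1, j}"
    using X(2) by (cases "m = 1 \<or> m = j") auto
  moreover have "Inl (attach m) \<in> verts (H j)" using attach(3)[OF True] by (simp add: H_simps)
  ultimately show ?thesis using True by (auto simp: cut_def H_simps)
next
  case False
  then show ?thesis using X(2) by (auto simp: cut_def H_simps)
qed

lemma card_cut_H:
  assumes X: "X \<subseteq> verts (H j)" "Inr False \<notin> X"
  defines "S \<equiv> Inl -` X" and "t \<equiv> Inr True \<in> X"
  shows "card (cut (H j) X) =
    card (inner_cut S) + of_bool t + card {m \<in> {1..4}. (attach m \<in> S) \<noteq> (t \<and> m \<in> {1, j})}"
proof -
  let ?R = "{m. m = 0 \<and> t} \<union> {m \<in> {1..4}. (attach m \<in> S) \<noteq> (t \<and> m \<in> {1, j})}"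
  have "cut (H j) X = Inl ` inner_cut S \<union> Inr ` ?R"
  proof (rule set_eqI)
    fix x show "x \<in> cut (H j) X \<longleftrightarrow> x \<in> Inl ` inner_cut S \<union> Inr ` ?R"
      using Inl_in_cut_H[OF X(1)] Inr_in_cut_H[OF X] unfolding S_def t_def by (cases x) auto
  qed
  moreover have "finite ?R" by (rule finite_subset[of _ "{0..4}"]) auto
  then have "card (Inl ` inner_cut S \<union> Inr ` ?R) = card (inner_cut S) + card ?R"
    by (subst card_Un_disjoint) (auto simp: card_image finite_inner_cut)
  moreover have "card ?R = of_bool t + card {m \<in> {1..4}. (attach m \<in> S) \<noteq> (t \<and> m \<in> {1, j})}"
    by (subst card_Un_disjoint) auto
  ultimately show ?thesis by simp
qed

lemma card_cut_H_inside:
  assumes X: "X \<subseteq> verts (H j)" "Inr False \<notin> X" "Inr True \<notin> X"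
  shows "card (cut (H j) X) = card (cut G (Inl -` X))"
proof -
  have "Inl -` X \<subseteq> A" using X(1) by (auto simp: H_simps)
  then show ?thesis
    using card_cut_H[OF X(1,2)] card_cut_inside_A X(3) by (simp add: hits_def)
qed

lemma card_cut_H_pair:
  assumes j: "j \<in> {2, 3, 4}" and X: "X \<subseteq> verts (H j)" "Inr False \<notin> X" "Inr True \<in> X"
  defines "S \<equiv> Inl -` X"
  shows "card (cut (H j) X) =
    card (inner_cut S) + 1 + hits (A - S) {1, j} + hits S ({1..4} - {1, j})"
proof -
  have "{m \<in> {1..4}. (attach m \<in> S) \<noteq> (m \<in> {1, j})}
      = {m \<in> {1, j}. attach m \<in> A - S} \<union> {m \<in> {1..4} - {1, j}. attach m \<in> S}"
    using j attach(3) by auto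
  then have "card {m \<in> {1..4}. (attach m \<in> S) \<noteq> (m \<in> {1, j})}
      = hits (A - S) {1, j} + hits S ({1..4} - {1, j})"
    unfolding hits_def by (simp add: card_Un_disjoint disjoint_iff)
  then show ?thesis using card_cut_H[OF X(1,2)] X(3) unfolding S_def by simp
qed

lemma card_sides_H:
  assumes X: "X \<subseteq> verts (H j)" "Inr False \<notin> X"
  defines "S \<equiv> Inl -` X" and "t \<equiv> Inr True \<in> X"
  shows "S \<subseteq> A" "card X = card S + of_bool t" "card (verts (H j) - X) = card (A - S) + 1 + of_bool (\<not> t)"
proof -
  show SA: "S \<subseteq> A" using X(1) unfolding S_def by (auto simp: H_simps)
  have finS: "finite S" using SA finite_A finite_subset by blast
  have "X = Inl ` S \<union> (if t then {Inr True} else {})"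
    using X unfolding S_def t_def by (auto simp: H_simps)
  then show "card X = card S + of_bool t"
    using finS by (simp add: card_image card_insert_if image_iff)
  have "verts (H j) - X = Inl ` (A - S) \<union> {Inr False} \<union> (if t then {} else {Inr True})"
    using X unfolding S_def t_def by (auto simp: H_simps)
  then show "card (verts (H j) - X) = card (A - S) + 1 + of_bool (\<not> t)"
    using finite_A by (simp add: card_image card_insert_if image_iff)
qed

lemma H_side_normal:
  assumes "X \<subseteq> verts (H j)"
  obtains Y where "Y \<subseteq> verts (H j)" "Inr False \<notin> Y" "cut (H j) Y = cut (H j) X"
    "(Y = X \<and> verts (H j) - Y = verts (H j) - X) \<or> (Y = verts (H j) - X \<and> verts (H j) - Y = X)"
proof (cases "Inr False \<in> X")
  case True
  have "Inr False \<notin> verts (H j) - X" "cut (H j) (verts (H j) - X) = cut (H j) X"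
    "verts (H j) - (verts (H j) - X) = X"
    using True cut_compl[OF assms] assms by auto
  then show ?thesis using that[of "verts (H j) - X"] by blast
next
  case False
  then show ?thesis using that[of X] assms by blast
qed

lemma cut_H_ge_3:
  assumes j: "j \<in> {2, 3, 4}" and X: "X \<subseteq> verts (H j)" "Inr False \<notin> X" "X \<noteq> {}"
  shows "3 \<le> card (cut (H j) X)"
proof (cases "Inr True \<in> X")
  case True
  then show ?thesis
    using card_cut_H_pair[OF j X(1,2) True] pair_side_bound(1)[OF j] card_sides_H(1)[OF X(1,2)]
    by simp
next
  case False
  obtain x where "x \<in> X" using X(3) by blast
  then have "Inl -` X \<noteq> {}" using False X(2) by (cases x) (auto, metis (full_types))
  then show ?thesis
    using card_cut_H_inside[OF X(1,2) False] cut_ge_3_in_A card_sides_H(1)[OF X(1,2)] by simp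
qed

lemma small_cut_H:
  assumes j: "j \<in> {2, 3, 4}" and X: "X \<subseteq> verts (H j)" "Inr False \<notin> X"
    and sides: "2 \<le> card X" "2 \<le> card (verts (H j) - X)" and small: "card (cut (H j) X) \<le> 3"
  shows "Inr True \<in> X" "\<forall>m\<in>{1..4}. attach m \<in> Inl -` X \<longleftrightarrow> m \<in> {1, j}"
    "card (inner_cut (Inl -` X)) = 2"
proof -
  note SA = card_sides_H(1)[OF X]
  show t: "Inr True \<in> X"
  proof (rule ccontr)
    assume "Inr True \<notin> X"
    then have "2 \<le> card (Inl -` X)" "card (cut (H j) X) = card (cut G (Inl -` X))"
      using card_sides_H(2)[OF X] sides(1) card_cut_H_inside[OF X] by simp_all
    then show False using cut_ge_4_in_A[OF SA] small by simp
  qed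
  have "Inl -` X \<noteq> {}" "Inl -` X \<noteq> A"
    using card_sides_H(2,3)[OF X] sides t by auto
  then show "\<forall>m\<in>{1..4}. attach m \<in> Inl -` X \<longleftrightarrow> m \<in> {1, j}" "card (inner_cut (Inl -` X)) = 2"
    using pair_side_bound(2)[OF j SA] card_cut_H_pair[OF j X t] small by simp_all
qed

lemma H_edge_connected:
  assumes j: "j \<in> {2, 3, 4}"
  shows "edge_connected 3 (H j)"
  unfolding edge_connected_def
proof (intro allI impI)
  fix X assume X: "X \<subseteq> verts (H j) \<and> X \<noteq> {} \<and> X \<noteq> verts (H j)"
  then obtain Y where Y: "Y \<subseteq> verts (H j)" "Inr False \<notin> Y" "cut (H j) Y = cut (H j) X" "Y \<noteq> {}"
    using H_side_normal[of X j] by (metis Diff_eq_empty_iff subset_antisym)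
  then show "3 \<le> card (cut (H j) X)" using cut_H_ge_3[OF j] by metis
qed

lemma small_cyclic_cut_H:
  assumes j: "j \<in> {2, 3, 4}" and X: "cyclic_cut (H j) X" and small: "card (cut (H j) X) \<le> 3"
  shows "\<forall>m\<in>{1..4}. Inr m \<notin> cut (H j) X"
    and "\<exists>S\<subseteq>A. (\<forall>m\<in>{1..4}. attach m \<in> S \<longleftrightarrow> m \<in> {1, j}) \<and> card (inner_cut S) = 2"
proof -
  have XV: "X \<subseteq> verts (H j)" using X by (simp add: cyclic_cut_def)
  have finV: "finite (verts (H j))" using finite_A by (simp add: H_simps)
  have sides: "2 \<le> card X" "2 \<le> card (verts (H j) - X)"
    using X has_cycle_induced_card(1) finite_subset[OF XV finV] finV
    by (auto simp: cyclic_cut_def)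
  obtain Y where Y: "Y \<subseteq> verts (H j)" "Inr False \<notin> Y" "cut (H j) Y = cut (H j) X"
    "2 \<le> card Y" "2 \<le> card (verts (H j) - Y)"
    using H_side_normal[OF XV] sides by metis
  note Y_small = small_cut_H[OF j Y(1,2,4,5) small[folded Y(3)]]
  show "\<forall>m\<in>{1..4}. Inr m \<notin> cut (H j) X"
    using Y_small Inr_in_cut_H[OF Y(1,2)] Y(3) by auto
  show "\<exists>S\<subseteq>A. (\<forall>m\<in>{1..4}. attach m \<in> S \<longleftrightarrow> m \<in> {1, j}) \<and> card (inner_cut S) = 2"
    using Y_small card_sides_H(1)[OF Y(1,2)] by blast
qed

text \<open>Uncrossing two 4-edge-cuts U, U' of G inside A whose union contains three attachment
  vertices: by submodularity both the intersection and the remaining quadrant have cuts of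
  size 3, hence at most one vertex.\<close>
lemma crossing_quadrants:
  assumes U: "U \<subseteq> A" "U' \<subseteq> A" "card (cut G U) \<le> 4" "card (cut G U') \<le> 4"
    and three: "hits (U \<union> U') {1..4} = 3"
    and ne: "U \<inter> U' \<noteq> {}" "A - (U \<union> U') \<noteq> {}"
  shows "card (U \<inter> U') \<le> 1" "card (A - (U \<union> U')) \<le> 1"
proof -
  have UU: "U \<union> U' \<subseteq> A" "U \<inter> U' \<subseteq> A" "A - (U \<union> U') \<subseteq> A" using U by auto
  have "card (cut G (A - (U \<union> U'))) + 2 = card (cut G (U \<union> U'))"
    using card_cut_inside_A[OF UU(1)] card_cut_inside_A[OF UU(3)] inner_cut_compl[OF UU(1)]
      hits_compl[of "{1..4}" "U \<union> U'"] three by simp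
  moreover have "card (cut G (U \<inter> U')) + card (cut G (U \<union> U')) \<le> 8"
  proof -
    have "U \<subseteq> verts G" "U' \<subseteq> verts G" using U(1,2) A_verts by auto
    from cut_submodular[OF wf this] show ?thesis using U(3,4) by linarith
  qed
  moreover have "3 \<le> card (cut G (U \<inter> U'))" "3 \<le> card (cut G (A - (U \<union> U')))"
    using cut_ge_3_in_A UU ne by auto
  ultimately have "card (cut G (U \<inter> U')) < 4" "card (cut G (A - (U \<union> U'))) < 4" by linarith+
  then show "card (U \<inter> U') \<le> 1" "card (A - (U \<union> U')) \<le> 1"
    using cut_ge_4_in_A[OF UU(2)] cut_ge_4_in_A[OF UU(3)] by linarith+
qed

lemma pair_side_cuts:
  assumes j: "j \<in> {2, 3, 4}" and S: "S \<subseteq> A" "\<forall>m\<in>{1..4}. attach m \<in> S \<longleftrightarrow> m \<in> {1, j}"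
    "card (inner_cut S) = 2"
  shows "card (cut G S) = 4" "card (cut G (A - S)) = 4"
proof -
  have "hits S {1..4} = 2" using hits_pattern[OF _ S(2)] j by auto
  then show "card (cut G S) = 4" "card (cut G (A - S)) = 4"
    using card_cut_inside_A[OF S(1)] card_cut_inside_A[of "A - S"] inner_cut_compl[OF S(1)]
      hits_compl[of "{1..4}" S] S(3) by simp_all
qed

lemma pair_sides_shape:
  assumes idx: "{1..4} = {1, j, j', r}" "distinct [1, j, j', r]"
    and S: "S \<subseteq> A" "\<forall>m\<in>{1..4}. attach m \<in> S \<longleftrightarrow> m \<in> {1, j}" "card (cut G S) \<le> 4"
      "card (cut G (A - S)) \<le> 4"
    and S': "S' \<subseteq> A" "\<forall>m\<in>{1..4}. attach m \<in> S' \<longleftrightarrow> m \<in> {1, j'}" "card (cut G S') \<le> 4"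
      "card (cut G (A - S')) \<le> 4"
  shows "S \<inter> S' = {attach 1}" "S - S' = {attach j}" "S' - S = {attach j'}" "A - (S \<union> S') = {attach r}"
proof -
  have m: "(1::nat) \<in> {1..4}" "j \<in> {1..4}" "j' \<in> {1..4}" "r \<in> {1..4}" using idx(1) by auto
  have in_S: "attach 1 \<in> S" "attach j \<in> S" "attach j' \<notin> S" "attach r \<notin> S"
    using S(2) m idx(2) by auto
  have in_S': "attach 1 \<in> S'" "attach j \<notin> S'" "attach j' \<in> S'" "attach r \<notin> S'"
    using S'(2) m idx(2) by auto
  have "hits (S \<union> S') {1..4} = card {1, j, j'}"
    using idx by (intro hits_pattern) (use S(2) S'(2) in auto)
  then have q1: "card (S \<inter> S') \<le> 1" "card (A - (S \<union> S')) \<le> 1"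
    using crossing_quadrants[OF S(1) S'(1) S(3) S'(3)] idx(2) in_S in_S' attach(3)[OF m(4)]
    by (auto simp: disjoint_iff)
  have "hits (S \<union> (A - S')) {1..4} = card {1, j, r}"
    using idx attach(3) by (intro hits_pattern) (use S(2) S'(2) in auto)
  then have q2: "card (S \<inter> (A - S')) \<le> 1" "card (A - (S \<union> (A - S'))) \<le> 1"
    using crossing_quadrants[OF S(1) _ S(3) S'(4)] idx(2) in_S in_S' attach(3)[OF m(2)] attach(3)[OF m(3)]
    by (auto simp: disjoint_iff)
  have single: "U = {x}" if "card U \<le> 1" "x \<in> U" "U \<subseteq> A" for U x
    using that finite_subset[OF that(3) finite_A] card_le_Suc0_iff_eq[of U] by auto
  show "S \<inter> S' = {attach 1}"
    by (rule single[OF q1(1)]) (use in_S in_S' S(1) in auto)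
  show "A - (S \<union> S') = {attach r}"
    by (rule single[OF q1(2)]) (use in_S in_S' attach(3)[OF m(4)] in auto)
  have "S \<inter> (A - S') = {attach j}"
    by (rule single[OF q2(1)]) (use in_S in_S' S(1) in auto)
  then show "S - S' = {attach j}" using S(1) by blast
  have "A - (S \<union> (A - S')) = {attach j'}"
    by (rule single[OF q2(2)]) (use in_S in_S' S'(1) in auto)
  then show "S' - S = {attach j'}" using S'(1) by blast
qed

lemma pair_sides_four_cycle:
  assumes jj: "j \<in> {2, 3, 4}" "j' \<in> {2, 3, 4}" "j \<noteq> j'"
    and S: "S \<subseteq> A" "\<forall>m\<in>{1..4}. attach m \<in> S \<longleftrightarrow> m \<in> {1, j}" "card (inner_cut S) = 2"
    and S': "S' \<subseteq> A" "\<forall>m\<in>{1..4}. attach m \<in> S' \<longleftrightarrow> m \<in> {1, j'}" "card (inner_cut S') = 2"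
  shows "is_4cycle (induced G A)"
proof -
  have "\<exists>r\<in>{2, 3, 4::nat}. r \<noteq> j \<and> r \<noteq> j'" using jj by auto
  then obtain r where r: "r \<in> {2, 3, 4}" "r \<noteq> j" "r \<noteq> j'" by blast
  have idx: "{1..4} = {1, j, j', r}" "distinct [1, j, j', r]" using jj r by auto
  note cuts = pair_side_cuts[OF jj(1) S] pair_side_cuts[OF jj(2) S']
  note le = cuts[THEN eq_imp_le]
  define a1 aj aj' ar where "a1 = attach 1" and "aj = attach j" and "aj' = attach j'" and "ar = attach r"
  have parts: "S \<inter> S' = {a1}" "S - S' = {aj}" "S' - S = {aj'}" "A - (S \<union> S') = {ar}"
    using pair_sides_shape[OF idx S(1,2) le(1,2) S'(1,2) le(3,4)]
    unfolding a1_def aj_def aj'_def ar_def by simp_all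
  have sides: "S = {a1, aj}" "S' = {a1, aj'}" "A - S = {aj', ar}" "A - S' = {aj, ar}"
    "A = {a1, aj, ar, aj'}"
  proof -
    have "S = (S \<inter> S') \<union> (S - S')" "S' = (S \<inter> S') \<union> (S' - S)"
      "A - S = (S' - S) \<union> (A - (S \<union> S'))" "A - S' = (S - S') \<union> (A - (S \<union> S'))"
      "A = (S \<inter> S') \<union> (S - S') \<union> (A - (S \<union> S')) \<union> (S' - S)"
      using S(1) S'(1) by blast+
    then show "S = {a1, aj}" "S' = {a1, aj'}" "A - S = {aj', ar}" "A - S' = {aj, ar}"
      "A = {a1, aj, ar, aj'}"
      unfolding parts by (simp_all add: insert_commute)
  qed
  have dist: "distinct [a1, aj, ar, aj']"
    using parts by auto
  obtain e0 where "e0 \<in> edges G" "ends G e0 = {a1, aj}"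
    using edge_of_pair[of a1 aj] sides(1,5) dist cuts(1) by auto
  moreover obtain e1 where "e1 \<in> edges G" "ends G e1 = {aj, ar}"
    using edge_of_pair[of aj ar] sides(4,5) dist cuts(4) by auto
  moreover obtain e2 where "e2 \<in> edges G" "ends G e2 = {ar, aj'}"
    using edge_of_pair[of ar aj'] sides(3,5) dist cuts(2) by (auto simp: insert_commute)
  moreover obtain e3 where "e3 \<in> edges G" "ends G e3 = {aj', a1}"
    using edge_of_pair[of aj' a1] sides(2,5) dist cuts(3) by (auto simp: insert_commute)
  moreover have "card (edges_within G A) = 4"
    using cubic_handshake[OF cubic A_verts] card_cut_A sides(5) dist by simp
  ultimately show ?thesis
    using is_4cycle_intro[OF wf sides(5) dist] by blast
qed

lemma not_cyc4_H_pair_side: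
  assumes j: "j \<in> {2, 3, 4}" and "\<not> cyc_edge_connected 4 (H j)"
  obtains S where "S \<subseteq> A" "\<forall>m\<in>{1..4}. attach m \<in> S \<longleftrightarrow> m \<in> {1, j}" "card (inner_cut S) = 2"
proof -
  obtain X where "cyclic_cut (H j) X" "card (cut (H j) X) \<le> 3"
    using assms(2) by (auto simp: cyc_edge_connected_def)
  then show ?thesis using small_cyclic_cut_H(2)[OF j] that by blast
qed

lemma two_H_cyc4:
  assumes "\<not> is_4cycle (induced G A)"
  shows "2 \<le> card {j \<in> {2, 3, 4}. cyc_edge_connected 4 (H j)}"
proof -
  define bad where "bad = {j \<in> {2, 3, 4}. \<not> cyc_edge_connected 4 (H j)}"
  have bad_sub: "bad \<subseteq> {2, 3, 4}" by (auto simp: bad_def)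
  have unique: "j = j'" if "j \<in> bad" "j' \<in> bad" for j j'
  proof (rule ccontr)
    assume "j \<noteq> j'"
    have jj: "j \<in> {2, 3, 4}" "\<not> cyc_edge_connected 4 (H j)"
      "j' \<in> {2, 3, 4}" "\<not> cyc_edge_connected 4 (H j')"
      using that unfolding bad_def by blast+
    obtain S where "S \<subseteq> A" "\<forall>m\<in>{1..4}. attach m \<in> S \<longleftrightarrow> m \<in> {1, j}" "card (inner_cut S) = 2"
      using not_cyc4_H_pair_side[OF jj(1,2)] .
    moreover obtain S' where "S' \<subseteq> A" "\<forall>m\<in>{1..4}. attach m \<in> S' \<longleftrightarrow> m \<in> {1, j'}"
      "card (inner_cut S') = 2"
      using not_cyc4_H_pair_side[OF jj(3,4)] .
    ultimately show False
      using pair_sides_four_cycle[OF jj(1,3) \<open>j \<noteq> j'\<close>] assms by blast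
  qed
  have fin: "finite bad" using bad_sub finite_subset by blast
  have "card bad \<le> 1" using card_le_Suc0_iff_eq[OF fin] unique by auto
  moreover have "{j \<in> {2, 3, 4}. cyc_edge_connected 4 (H j)} = {2, 3, 4} - bad"
    unfolding bad_def by blast
  moreover have "card ({2, 3, 4::nat} - bad) = 3 - card bad"
    using card_Diff_subset[OF fin bad_sub] by simp
  ultimately show ?thesis by simp
qed

end

theorem mainTheorem11:
  fixes G :: "('v, 'e) multigraph" and A :: "'v set" and cs :: "nat \<Rightarrow> 'e"
  assumes "cubic G"
    and "cyc_edge_connected 4 G"
    and "cyclic_cut G A"
    and "card (cut G A) = 4"
    and "inj_on cs {1..4}"
    and "cs ` {1..4} = cut G A"
  shows "(\<forall>j \<in> {2, 3, 4}.
            edge_connected 3 (GA G A cs 1 j) \<and>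
            (\<forall>m \<in> {1..4}. \<forall>X. cyclic_cut (GA G A cs 1 j) X \<and> card (cut (GA G A cs 1 j) X) = 3
                 \<longrightarrow> Inr m \<notin> cut (GA G A cs 1 j) X))
       \<and> (\<not> is_4cycle (induced G A) \<longrightarrow>
            card {j \<in> {2, 3, 4}. cyc_edge_connected 4 (GA G A cs 1 j)} \<ge> 2)"
proof -
  interpret cyclic_four_cut G A cs
    using assms by unfold_locales
  have H: "GA G A cs 1 j = H j" for j
    by (simp add: H_def)
  show ?thesis
    unfolding H
  proof (intro conjI ballI allI impI)
    fix j :: nat assume j: "j \<in> {2, 3, 4}"
    show "edge_connected 3 (H j)" by (rule H_edge_connected[OF j])
    fix m :: nat and X assume "m \<in> {1..4}" "cyclic_cut (H j) X \<and> card (cut (H j) X) = 3"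
    then show "Inr m \<notin> cut (H j) X" using small_cyclic_cut_H(1)[OF j, of X] by simp
  next
    assume "\<not> is_4cycle (induced G A)"
    then show "2 \<le> card {j \<in> {2, 3, 4}. cyc_edge_connected 4 (H j)}" by (rule two_H_cyc4)
  qed
qed

end
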